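(* Let $\mathbf{S}$ be any one of the four systems $\mathbf{G3N}$, $\mathbf{G3NeF}$, $\mathbf{G3CoPC}$, $\mathbf{G3MPC}$. Let $\Gamma$ be a finite multiset of formulas none of which contains the connective $\vee$, and let $\varphi,\psi$ be formulas. If $\Gamma\Rightarrow\varphi\vee\psi$ has a derivation in $\mathbf{S}$ of height $n$, then $\Gamma\Rightarrow\varphi$ or $\Gamma\Rightarrow\psi$ has a derivation in $\mathbf{S}$ of height at most $n$.
   Context: Formulas are generated from a countable set of propositional variables $p,q,\dots$ and the constant $\top$ by the grammar $\varphi::= p\mid\top\mid\varphi\wedge\varphi\mid\varphi\vee\varphi\mid\varphi\to\varphi\mid\neg\varphi$ (there is no constant $\bot$). $\varphi\leftrightarrow\psi$ abbreviates $(\varphi\to\psi)\wedge(\psi\to\varphi)$. A sequent is an expression $\Gamma\Rightarrow\varphi$ where $\Gamma$ is a finite multiset of formulas and $\varphi$ is a formula (the goal); $\Gamma,\Delta$ denotes multiset union and $\Gamma,\alpha$ denotes $\Gamma$ with one more occurrence of $\alpha$. Rules ($p$ a propositional variable): (ax) $\Gamma,p\Rightarrow p$ (no premises); ($\top$) $\Gamma\Rightarrow\top$ (no premises); ($\to$r) from $\Gamma,\alpha\Rightarrow\beta$ infer $\Gamma\Rightarrow\alpha\to\beta$; ($\to$l) from $\Gamma,\alpha\to\beta\Rightarrow\alpha$ and $\Gamma,\beta\Rightarrow\varphi$ infer $\Gamma,\alpha\to\beta\Rightarrow\varphi$; ($\wedge$r) from $\Gamma\Rightarrow\alpha$ and $\Gamma\Rightarrow\beta$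 infer $\Gamma\Rightarrow\alpha\wedge\beta$; ($\wedge$l) from $\Gamma,\alpha,\beta\Rightarrow\varphi$ infer $\Gamma,\alpha\wedge\beta\Rightarrow\varphi$; ($\vee$r$_1$), ($\vee$r$_2$) from $\Gamma\Rightarrow\alpha$ (resp. $\Gamma\Rightarrow\beta$) infer $\Gamma\Rightarrow\alpha\vee\beta$; ($\vee$l) from $\Gamma,\alpha\Rightarrow\varphi$ and $\Gamma,\beta\Rightarrow\varphi$ infer $\Gamma,\alpha\vee\beta\Rightarrow\varphi$; (n) from $\Gamma,\neg\alpha,\beta\Rightarrow\alpha$ and $\Gamma,\neg\alpha,\alpha\Rightarrow\beta$ infer $\Gamma,\neg\alpha\Rightarrow\neg\beta$; (nef) from $\Gamma,\neg\alpha\Rightarrow\alpha$ infer $\Gamma,\neg\alpha\Rightarrow\neg\beta$; (copc) from $\Gamma,\neg\alpha,\beta\Rightarrow\alpha$ infer $\Gamma,\neg\alpha\Rightarrow\neg\beta$; (an) from $\Gamma,\alpha\Rightarrow\neg\alpha$ infer $\Gamma\Rightarrow\neg\alpha$. The rules (ax) through ($\vee$l) are the positive rules. The four systems are: $\mathbf{G3N}$ = positive rules + (n); $\mathbf{G3NeF}$ = positive rules + (n) + (nef); $\mathbf{G3CoPC}$ = positive rules + (copc); $\mathbf{G3MPC}$ = positive rules + (copc) + (an). None of them contains weakening, contraction or cut as a rule. A derivation is a finite tree of rule instances with leaves instances of (ax) or ($\top$); its height is the number of inference steps on a longest branch. A sequent is derivable if it has a derivation; a formula $\varphi$ is a theorem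 if $\Rightarrow\varphi$ (empty antecedent) is derivable. *)

theory Defs
  imports Main "HOL-Library.Multiset"
begin

datatype fm = Var nat | Top | And fm fm | Or fm fm | Imp fm fm | Neg fm

fun no_or :: "fm \<Rightarrow> bool" where
  "no_or (Var p) = True"
| "no_or Top = True"
| "no_or (And a b) = (no_or a \<and> no_or b)"
| "no_or (Or a b) = False"
| "no_or (Imp a b) = (no_or a \<and> no_or b)"
| "no_or (Neg a) = no_or a"

datatype sys = G3N | G3NeF | G3CoPC | G3MPC

definition has_n :: "sys \<Rightarrow> bool" where "has_n S \<longleftrightarrow> S = G3N \<or> S = G3NeF"
definition has_nef :: "sys \<Rightarrow> bool" where "has_nef S \<longleftrightarrow> S = G3NeF"
definition has_copc :: "sys \<Rightarrow> bool" where "has_copc S \<longleftrightarrow> S = G3CoPC \<or> S = G3MPC"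
definition has_an :: "sys \<Rightarrow> bool" where "has_an S \<longleftrightarrow> S = G3MPC"

text \<open>derh S \<Gamma> \<phi> n : the sequent \<Gamma> \<Rightarrow> \<phi> has a derivation in S of height exactly n
  (leaves have height 0, an inference has height 1 + max of premise heights).\<close>
inductive derh :: "sys \<Rightarrow> fm multiset \<Rightarrow> fm \<Rightarrow> nat \<Rightarrow> bool" where
  ax: "derh S (add_mset (Var p) \<Gamma>) (Var p) 0"
| top: "derh S \<Gamma> Top 0"
| impR: "derh S (add_mset a \<Gamma>) b n \<Longrightarrow> derh S \<Gamma> (Imp a b) (Suc n)"
| impL: "derh S (add_mset (Imp a b) \<Gamma>) a n \<Longrightarrow> derh S (add_mset b \<Gamma>) c m
         \<Longrightarrow> derh S (add_mset (Imp a b) \<Gamma>) c (Suc (max n m))"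
| andR: "derh S \<Gamma> a n \<Longrightarrow> derh S \<Gamma> b m \<Longrightarrow> derh S \<Gamma> (And a b) (Suc (max n m))"
| andL: "derh S (add_mset a (add_mset b \<Gamma>)) c n \<Longrightarrow> derh S (add_mset (And a b) \<Gamma>) c (Suc n)"
| orR1: "derh S \<Gamma> a n \<Longrightarrow> derh S \<Gamma> (Or a b) (Suc n)"
| orR2: "derh S \<Gamma> b n \<Longrightarrow> derh S \<Gamma> (Or a b) (Suc n)"
| orL: "derh S (add_mset a \<Gamma>) c n \<Longrightarrow> derh S (add_mset b \<Gamma>) c m
         \<Longrightarrow> derh S (add_mset (Or a b) \<Gamma>) c (Suc (max n m))"
| nrule: "has_n S \<Longrightarrow> derh S (add_mset (Neg a) (add_mset b \<Gamma>)) a n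
         \<Longrightarrow> derh S (add_mset (Neg a) (add_mset a \<Gamma>)) b m
         \<Longrightarrow> derh S (add_mset (Neg a) \<Gamma>) (Neg b) (Suc (max n m))"
| nef: "has_nef S \<Longrightarrow> derh S (add_mset (Neg a) \<Gamma>) a n
         \<Longrightarrow> derh S (add_mset (Neg a) \<Gamma>) (Neg b) (Suc n)"
| copc: "has_copc S \<Longrightarrow> derh S (add_mset (Neg a) (add_mset b \<Gamma>)) a n
         \<Longrightarrow> derh S (add_mset (Neg a) \<Gamma>) (Neg b) (Suc n)"
| an: "has_an S \<Longrightarrow> derh S (add_mset a \<Gamma>) (Neg a) n
         \<Longrightarrow> derh S \<Gamma> (Neg a) (Suc n)"

end

theory Submission
  imports Defs
begin

text \<open>With an Or-free antecedent, (\<or>l) cannot occur at the root of a derivation of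
  \<Gamma> \<Rightarrow> \<phi> \<or> \<psi>, and no negation rule has a disjunctive goal. So the last rule is either
  (\<or>r), whose premise is the wanted derivation, or one of (\<and>l), (\<rightarrow>l). These keep the
  goal in one premise whose antecedent is still Or-free; by induction that premise
  splits, and reapplying the left rule to the split premise does not increase the height.\<close>

lemma derh_Or_goal_split:
  assumes "derh S \<Gamma> c n" and "\<forall>\<chi> \<in># \<Gamma>. no_or \<chi>" and "c = Or \<phi> \<psi>"
  shows "\<exists>m \<le> n. \<exists>\<chi> \<in> {\<phi>, \<psi>}. derh S \<Gamma> \<chi> m"
  using assms
proof (induction rule: derh.induct)
  case (impL S a b \<Gamma> n c m)
  then obtain k \<chi> where "k \<le> m" "\<chi> \<in> {\<phi>, \<psi>}" "derh S (add_mset b \<Gamma>) \<chi> k"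
    by auto
  moreover from impL.hyps(1) this(3)
  have "derh S (add_mset (Imp a b) \<Gamma>) \<chi> (Suc (max n k))"
    by (rule derh.impL)
  ultimately show ?case
    by (intro exI[of _ "Suc (max n k)"]) auto
next
  case (andL S a b \<Gamma> c n)
  then obtain k \<chi> where "k \<le> n" "\<chi> \<in> {\<phi>, \<psi>}" "derh S (add_mset a (add_mset b \<Gamma>)) \<chi> k"
    by auto
  moreover from this(3) have "derh S (add_mset (And a b) \<Gamma>) \<chi> (Suc k)"
    by (rule derh.andL)
  ultimately show ?case
    by (intro exI[of _ "Suc k"]) auto
next
  case (orR1 S \<Gamma> a n b)
  then show ?case by (intro exI[of _ n]) auto
next
  case (orR2 S \<Gamma> b n a)
  then show ?case by (intro exI[of _ n]) auto
qed auto

theorem mainTheorem5: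
  fixes S :: sys and \<Gamma> :: "fm multiset" and \<phi> \<psi> :: fm and n :: nat
  assumes "\<forall>\<chi> \<in># \<Gamma>. no_or \<chi>"
    and "derh S \<Gamma> (Or \<phi> \<psi>) n"
  shows "\<exists>m \<le> n. derh S \<Gamma> \<phi> m \<or> derh S \<Gamma> \<psi> m"
  using derh_Or_goal_split[OF assms(2) assms(1) refl] by auto

end
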